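(* Let $T$, $\mathcal{S}=\mathcal{S}_+\cup\mathcal{S}_-$, $\Psi$, $U$, $\lambda$ and $P_\lambda$ be as in the context. Consider the discrete-time QBD with phase space $\mathcal{S}$ and transition blocks $$A_{-1}=\begin{bmatrix}0&0\\0&(I-\lambda^{-1}U)^{-1}\end{bmatrix},\quad A_0=\begin{bmatrix}0&P_{\lambda+-}\\0&0\end{bmatrix},\quad A_1=\begin{bmatrix}P_{\lambda++}&0\\0&0\end{bmatrix}.$$ Then its $\mathcal{G}$-matrix is $$\mathcal{G}_A=\begin{bmatrix}0&\Psi\\0&(I-\lambda^{-1}U)^{-1}\end{bmatrix}.$$
   Context: $T$ is the generator of a continuous-time Markov chain on a finite set $\mathcal{S}=\mathcal{S}_+\cup\mathcal{S}_-$ (disjoint, both nonempty), partitioned into blocks $T_{++},T_{+-},T_{-+},T_{--}$ according to $\mathcal{S}_\pm$. $\Psi$ is the minimal nonnegative solution of $T_{+-}+\Psi T_{--}+T_{++}\Psi+\Psi T_{-+}\Psi=0$ (the first-return probability matrix of the unit-rate fluid queue with phase generator $T$, rates $+1$ on $\mathcal{S}_+$ and $-1$ on $\mathcal{S}_-$), and $U:=T_{--}+T_{-+}\Psi$. $\lambda>0$ satisfies $\lambda\ge\max_i|T_{ii}|$, and $P_\lambda:=I+\lambda^{-1}T$ with blocks $P_{\lambda++}$ etc. A discrete-time quasi-birth-death process (QBD) with transition blocks $L_{-1},L_0,L_1$ is a Markov chain $\{(Y_n,\kappa_n)\}$ on $\mathbb{Z}\times\mathcal{S}$ with $\mathbb{P}[Y_n=k+d,\kappa_n=j\mid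 Y_{n-1}=k,\kappa_{n-1}=i]=(L_d)_{ij}$ for $d\in\{-1,0,1\}$. Its $\mathcal{G}$-matrix has entries $\mathcal{G}_{ij}=\mathbb{P}[\theta<\infty,\kappa_\theta=j\mid Y_0=k,\kappa_0=i]$, where $\theta=\inf\{n>0:Y_n=k-1\}$. All matrices are partitioned into blocks according to $\mathcal{S}_+,\mathcal{S}_-$. *)

theory Defs
  imports "HOL-Analysis.Analysis"
begin

text \<open>Matrices indexed by the finite phase space 's are functions 's => 's => real.
  The phase space is UNIV :: 's set, partitioned into Sp and its complement Sm.\<close>

definition is_generator :: "('s::finite \<Rightarrow> 's \<Rightarrow> real) \<Rightarrow> bool" where
  "is_generator T \<longleftrightarrow> (\<forall>i j. i \<noteq> j \<longrightarrow> T i j \<ge> 0) \<and> (\<forall>i. (\<Sum>j\<in>UNIV. T i j) = 0)"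

definition riccati_sol :: "('s::finite \<Rightarrow> 's \<Rightarrow> real) \<Rightarrow> 's set \<Rightarrow> ('s \<Rightarrow> 's \<Rightarrow> real) \<Rightarrow> bool" where
  "riccati_sol T Sp Psi \<longleftrightarrow> (\<forall>i\<in>Sp. \<forall>j\<in>-Sp.
      T i j + (\<Sum>k\<in>-Sp. Psi i k * T k j) + (\<Sum>k\<in>Sp. T i k * Psi k j)
      + (\<Sum>k\<in>-Sp. \<Sum>l\<in>Sp. Psi i k * T k l * Psi l j) = 0)"

definition min_nonneg_riccati_sol :: "('s::finite \<Rightarrow> 's \<Rightarrow> real) \<Rightarrow> 's set \<Rightarrow> ('s \<Rightarrow> 's \<Rightarrow> real) \<Rightarrow> bool" where
  "min_nonneg_riccati_sol T Sp Psi \<longleftrightarrow>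
     (\<forall>i\<in>Sp. \<forall>j\<in>-Sp. Psi i j \<ge> 0) \<and> riccati_sol T Sp Psi \<and>
     (\<forall>Phi. (\<forall>i\<in>Sp. \<forall>j\<in>-Sp. Phi i j \<ge> 0) \<and> riccati_sol T Sp Phi
            \<longrightarrow> (\<forall>i\<in>Sp. \<forall>j\<in>-Sp. Psi i j \<le> Phi i j))"

definition Umat :: "('s::finite \<Rightarrow> 's \<Rightarrow> real) \<Rightarrow> 's set \<Rightarrow> ('s \<Rightarrow> 's \<Rightarrow> real) \<Rightarrow> 's \<Rightarrow> 's \<Rightarrow> real" where
  "Umat T Sp Psi i j = T i j + (\<Sum>k\<in>Sp. T i k * Psi k j)"

definition Plam :: "real \<Rightarrow> ('s \<Rightarrow> 's \<Rightarrow> real) \<Rightarrow> 's \<Rightarrow> 's \<Rightarrow> real" where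
  "Plam lam T i j = (if i = j then 1 else 0) + T i j / lam"

text \<open>QBD on Z x 's with blocks Lm (= L_{-1}), L0, L1. Starting from level k, phase i,
  taboo_dist Lm L0 L1 i n (m, s) is the probability that the chain is at level k+m in phase s
  at time n without having visited level k-1 at times 1..n (levels below k are only reachable
  through level k-1 since the level changes by at most one per step).\<close>
fun taboo_dist :: "('s::finite \<Rightarrow> 's \<Rightarrow> real) \<Rightarrow> ('s \<Rightarrow> 's \<Rightarrow> real) \<Rightarrow> ('s \<Rightarrow> 's \<Rightarrow> real)
    \<Rightarrow> 's \<Rightarrow> nat \<Rightarrow> nat \<Rightarrow> 's \<Rightarrow> real" where
  "taboo_dist Lm L0 L1 i 0 m s = (if m = 0 \<and> s = i then 1 else 0)"
| "taboo_dist Lm L0 L1 i (Suc n) m s =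
     (\<Sum>r\<in>UNIV. taboo_dist Lm L0 L1 i n (Suc m) r * Lm r s
              + taboo_dist Lm L0 L1 i n m r * L0 r s
              + (if m > 0 then taboo_dist Lm L0 L1 i n (m - 1) r * L1 r s else 0))"

text \<open>Probability that theta = n+1 and kappa_theta = j, given Y_0 = k, kappa_0 = i.\<close>
definition first_passage :: "('s::finite \<Rightarrow> 's \<Rightarrow> real) \<Rightarrow> ('s \<Rightarrow> 's \<Rightarrow> real) \<Rightarrow> ('s \<Rightarrow> 's \<Rightarrow> real)
    \<Rightarrow> nat \<Rightarrow> 's \<Rightarrow> 's \<Rightarrow> real" where
  "first_passage Lm L0 L1 n i j = (\<Sum>r\<in>UNIV. taboo_dist Lm L0 L1 i n 0 r * Lm r j)"

text \<open>G-matrix: G_ij = P[theta < infinity, kappa_theta = j | Y_0 = k, kappa_0 = i].\<close>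
definition qbd_G :: "('s::finite \<Rightarrow> 's \<Rightarrow> real) \<Rightarrow> ('s \<Rightarrow> 's \<Rightarrow> real) \<Rightarrow> ('s \<Rightarrow> 's \<Rightarrow> real)
    \<Rightarrow> 's \<Rightarrow> 's \<Rightarrow> real" where
  "qbd_G Lm L0 L1 i j = (\<Sum>n. first_passage Lm L0 L1 n i j)"

end

(* The QBD can only move up while in S+, cross once to S- at constant level, and move down
   while in S-.  So it first passes one level down either at once (A_{-1}) or after a up-steps,
   the crossing and a+1 down-steps: G = A_{-1} + sum_a A_1^a A_0 A_{-1}^(a+1).  On the S+ x S-
   block this series is the least nonnegative solution of Y = (A_0 + A_1 Y) A_{-1}, and since
   A_{-1} inverts I - U/lambda this linear equation is the Riccati equation with the right factor
   of its quadratic term frozen at Psi.  Hence Psi solves it, so G <= Psi; and G <= Psi makes G a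
   supersolution of the Riccati equation, so Psi <= G by minimality of Psi, which is the limit of
   a monotone fixed-point iteration of the uniformised Riccati operator.  Nonnegativity of
   (I - U/lambda)^{-1} holds because it is a Z-matrix with row sums at least 1. *)

theory Submission
  imports Defs "HOL-Library.Function_Algebras"
begin

type_synonym 's rmat = "'s \<Rightarrow> 's \<Rightarrow> real"

definition mat_mul :: "'s::finite rmat \<Rightarrow> 's rmat \<Rightarrow> 's rmat" (infixl "\<otimes>" 70) where
  "A \<otimes> B = (\<lambda>i j. \<Sum>k\<in>UNIV. A i k * B k j)"

definition mat_one :: "'s rmat" where
  "mat_one = (\<lambda>i j. if i = j then 1 else 0)"

primrec mat_pow :: "'s::finite rmat \<Rightarrow> nat \<Rightarrow> 's rmat" where
  "mat_pow A 0 = mat_one"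
| "mat_pow A (Suc n) = mat_pow A n \<otimes> A"

lemma sum_apply: "(\<Sum>a\<in>I. F a) x = (\<Sum>a\<in>I. F a x)"
  by (induction I rule: infinite_finite_induct) auto

lemma sum_add_sum_Compl: "sum f A + sum f (- A) = sum f (UNIV :: 'a::finite set)"
proof -
  have "sum f (A \<union> - A) = sum f A + sum f (- A)"
    by (rule sum.union_disjoint) auto
  then show ?thesis
    by simp
qed

lemma mat_mul_assoc: "A \<otimes> B \<otimes> C = A \<otimes> (B \<otimes> C)"
proof (intro ext)
  fix i j
  have "(A \<otimes> B \<otimes> C) i j = (\<Sum>l\<in>UNIV. \<Sum>k\<in>UNIV. A i k * B k l * C l j)"
    unfolding mat_mul_def by (simp add: sum_distrib_right)
  also have "\<dots> = (\<Sum>k\<in>UNIV. \<Sum>l\<in>UNIV. A i k * B k l * C l j)"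
    by (rule sum.swap)
  also have "\<dots> = (A \<otimes> (B \<otimes> C)) i j"
    unfolding mat_mul_def by (simp add: sum_distrib_left mult.assoc)
  finally show "(A \<otimes> B \<otimes> C) i j = (A \<otimes> (B \<otimes> C)) i j" .
qed

lemma mat_mul_one_left [simp]: "mat_one \<otimes> A = A"
  and mat_mul_one_right [simp]: "A \<otimes> mat_one = A"
  by (simp_all add: mat_mul_def mat_one_def fun_eq_iff if_distrib if_distribR cong: if_cong)

lemma mat_mul_zero_left [simp]: "0 \<otimes> A = 0"
  and mat_mul_zero_right [simp]: "A \<otimes> 0 = 0"
  by (simp_all add: mat_mul_def zero_fun_def)

lemma mat_mul_add_left: "(A + B) \<otimes> C = A \<otimes> C + B \<otimes> C"
  and mat_mul_add_right: "A \<otimes> (B + C) = A \<otimes> B + A \<otimes> C"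
  by (simp_all add: mat_mul_def algebra_simps sum.distrib fun_eq_iff)

lemma mat_mul_sum_left: "(\<Sum>a\<in>I. F a) \<otimes> B = (\<Sum>a\<in>I. F a \<otimes> B)"
  and mat_mul_sum_right: "A \<otimes> (\<Sum>a\<in>I. F a) = (\<Sum>a\<in>I. A \<otimes> F a)"
  by (induction I rule: infinite_finite_induct) (simp_all add: mat_mul_add_left mat_mul_add_right)

lemma mat_pow_Suc_left: "mat_pow A (Suc n) = A \<otimes> mat_pow A n"
  by (induction n) (simp_all add: mat_mul_assoc)

lemma mat_mul_mono:
  assumes "0 \<le> A" "A \<le> A'" "0 \<le> B" "B \<le> B'"
  shows "A \<otimes> B \<le> A' \<otimes> B'"
proof (intro le_funI)
  fix i j
  have "A i k * B k j \<le> A' i k * B' k j" for k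
  proof (rule mult_mono)
    show "A i k \<le> A' i k" "B k j \<le> B' k j" "0 \<le> B k j"
      using assms by (simp_all add: le_fun_def)
    show "0 \<le> A' i k"
      using assms by (simp add: le_fun_def) (metis order_trans)
  qed
  then show "(A \<otimes> B) i j \<le> (A' \<otimes> B') i j"
    unfolding mat_mul_def by (simp add: sum_mono)
qed

lemma mat_mul_nonneg: "0 \<le> A \<Longrightarrow> 0 \<le> B \<Longrightarrow> 0 \<le> A \<otimes> B"
  using mat_mul_mono[of 0 A 0 B] by simp

lemma tendsto_mat_mul:
  assumes "\<And>i j. (\<lambda>k. A k i j) \<longlonglongrightarrow> A' i j" "\<And>i j. (\<lambda>k. B k i j) \<longlonglongrightarrow> B' i j"
  shows "(\<lambda>k. (A k \<otimes> B k) i j) \<longlonglongrightarrow> (A' \<otimes> B') i j"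
  unfolding mat_mul_def by (intro tendsto_intros assms)

lemma row_mult_cancel:
  fixes A B :: "'s::finite rmat"
  assumes y: "\<forall>k\<in>S. y k = (\<Sum>l\<in>S. w l * A l k)"
    and AB: "\<And>l j. l \<in> S \<Longrightarrow> j \<in> S \<Longrightarrow> (\<Sum>k\<in>S. A l k * B k j) = mat_one l j"
    and j: "j \<in> S"
  shows "(\<Sum>k\<in>S. y k * B k j) = w j"
proof -
  have "(\<Sum>k\<in>S. y k * B k j) = (\<Sum>k\<in>S. \<Sum>l\<in>S. w l * A l k * B k j)"
    using y by (simp add: sum_distrib_right)
  also have "\<dots> = (\<Sum>l\<in>S. w l * (\<Sum>k\<in>S. A l k * B k j))"
    by (subst sum.swap) (simp add: sum_distrib_left mult.assoc)
  also have "\<dots> = (\<Sum>l\<in>S. w l * mat_one l j)"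
    using AB j by simp
  also have "\<dots> = w j"
    using j by (simp add: mat_one_def if_distrib cong: if_cong)
  finally show ?thesis .
qed

lemma row_mult_inverse_iff:
  fixes X N :: "'s::finite rmat"
  assumes "\<And>i j. i \<in> S \<Longrightarrow> j \<in> S \<Longrightarrow> (\<Sum>k\<in>S. X i k * N k j) = mat_one i j"
    and "\<And>i j. i \<in> S \<Longrightarrow> j \<in> S \<Longrightarrow> (\<Sum>k\<in>S. N i k * X k j) = mat_one i j"
  shows "(\<forall>j\<in>S. y j = (\<Sum>k\<in>S. w k * X k j)) \<longleftrightarrow> (\<forall>j\<in>S. (\<Sum>k\<in>S. y k * N k j) = w j)"
proof
  assume "\<forall>j\<in>S. y j = (\<Sum>k\<in>S. w k * X k j)"
  then show "\<forall>j\<in>S. (\<Sum>k\<in>S. y k * N k j) = w j"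
    using row_mult_cancel[of S y w X N] assms(1) by blast
next
  assume "\<forall>j\<in>S. (\<Sum>k\<in>S. y k * N k j) = w j"
  then have "\<forall>k\<in>S. w k = (\<Sum>l\<in>S. y l * N l k)"
    by simp
  then show "\<forall>j\<in>S. y j = (\<Sum>k\<in>S. w k * X k j)"
    using row_mult_cancel[of S w y N X] assms(2) by (simp add: eq_commute)
qed

text \<open>A matrix with nonpositive off-diagonal entries and positive row sums has a nonnegative
  inverse: at a negative minimal entry of the inverse the defining equation would be negative.\<close>
lemma right_inverse_nonneg:
  fixes N X :: "'s::finite rmat"
  assumes offdiag: "\<And>i k. i \<in> S \<Longrightarrow> k \<in> S \<Longrightarrow> i \<noteq> k \<Longrightarrow> N i k \<le> 0"
    and row_sum: "\<And>i. i \<in> S \<Longrightarrow> (\<Sum>k\<in>S. N i k) > 0"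
    and N_X: "\<And>i j. i \<in> S \<Longrightarrow> j \<in> S \<Longrightarrow> (\<Sum>k\<in>S. N i k * X k j) = mat_one i j"
    and ij: "i \<in> S" "j \<in> S"
  shows "X i j \<ge> 0"
proof (rule ccontr)
  assume neg: "\<not> X i j \<ge> 0"
  define V where "V = case_prod X ` (S \<times> S)"
  have "finite V" "V \<noteq> {}"
    using ij by (auto simp: V_def)
  then have "Min V \<in> V"
    by (rule Min_in)
  then obtain i0 j0 where ij0: "i0 \<in> S" "j0 \<in> S" and min: "X i0 j0 = Min V"
    by (auto simp: V_def)
  have le_min: "X i0 j0 \<le> X k l" if "k \<in> S" "l \<in> S" for k l
  proof -
    have "X k l \<in> V"
      using that by (force simp: V_def)
    with \<open>finite V\<close> show ?thesis
      unfolding min by (rule Min_le)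
  qed
  have "X i0 j0 < 0"
    using le_min[OF ij] neg by simp
  have "mat_one i0 j0 = (\<Sum>k\<in>S. N i0 k * X k j0)"
    using N_X ij0 by simp
  also have "\<dots> \<le> (\<Sum>k\<in>S. N i0 k * X i0 j0)"
  proof (rule sum_mono)
    show "N i0 k * X k j0 \<le> N i0 k * X i0 j0" if "k \<in> S" for k
      using that ij0 le_min offdiag by (cases "k = i0") (auto intro: mult_left_mono_neg)
  qed
  also have "\<dots> = (\<Sum>k\<in>S. N i0 k) * X i0 j0"
    by (simp add: sum_distrib_right)
  also have "\<dots> < 0"
    using row_sum[OF ij0(1)] \<open>X i0 j0 < 0\<close> by (simp add: mult_pos_neg)
  finally show False
    by (simp add: mat_one_def split: if_splits)
qed

lemma least_nonneg_fixpoint_by_iteration: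
  fixes F :: "('a \<Rightarrow> 'b \<Rightarrow> real) \<Rightarrow> 'a \<Rightarrow> 'b \<Rightarrow> real"
  assumes mono: "\<And>A B. 0 \<le> A \<Longrightarrow> A \<le> B \<Longrightarrow> F A \<le> F B"
    and F_0: "0 \<le> F 0"
    and cont: "\<And>Y L i j. (\<And>i j. (\<lambda>k. Y k i j) \<longlonglongrightarrow> L i j) \<Longrightarrow> (\<lambda>k. F (Y k) i j) \<longlonglongrightarrow> F L i j"
    and super: "0 \<le> B\<^sub>0" "F B\<^sub>0 \<le> B\<^sub>0"
  obtains L where "F L = L" "0 \<le> L" "\<And>B. 0 \<le> B \<Longrightarrow> F B \<le> B \<Longrightarrow> L \<le> B"
    and "\<And>i j. (\<lambda>k. (F ^^ k) 0 i j) \<longlonglongrightarrow> L i j"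
proof -
  define Y where "Y k = (F ^^ k) 0" for k
  have Y_Suc: "Y (Suc k) = F (Y k)" for k
    by (simp add: Y_def)
  have Y_inc: "0 \<le> Y k \<and> Y k \<le> Y (Suc k)" for k
  proof (induction k)
    case 0
    have "Y 0 = 0" "Y (Suc 0) = F 0"
      by (simp_all add: Y_def)
    with F_0 show ?case
      by (simp only:) simp
  next
    case (Suc k)
    then have "0 \<le> Y (Suc k)"
      by (blast intro: order_trans)
    moreover have "F (Y k) \<le> F (Y (Suc k))"
      using Suc by (blast intro: mono)
    ultimately show ?case
      by (simp only: Y_Suc)
  qed
  have Y_le: "Y k \<le> B" if "0 \<le> B" "F B \<le> B" for B k
  proof (induction k)
    case 0
    have "Y 0 = 0"
      by (simp add: Y_def)
    with that(1) show ?case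
      by (simp only:)
  next
    case (Suc k)
    have "F (Y k) \<le> F B"
      using Y_inc[of k] Suc by (blast intro: mono)
    then show ?case
      unfolding Y_Suc using that(2) by (rule order_trans)
  qed
  define L where "L i j = (SUP k. Y k i j)" for i j
  have lim: "(\<lambda>k. Y k i j) \<longlonglongrightarrow> L i j" for i j
    unfolding L_def
  proof (rule LIMSEQ_incseq_SUP)
    show "bdd_above (range (\<lambda>k. Y k i j))"
      using Y_le[OF super] by (intro bdd_aboveI[of _ "B\<^sub>0 i j"]) (auto simp: le_fun_def)
    show "incseq (\<lambda>k. Y k i j)"
      using Y_inc by (auto simp: le_fun_def intro!: incseq_SucI)
  qed
  show thesis
  proof
    show "F L = L"
    proof (intro ext)
      fix i j
      have "(\<lambda>k. Y (Suc k) i j) \<longlonglongrightarrow> F L i j"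
        unfolding Y_Suc by (rule cont[OF lim])
      then show "F L i j = L i j"
        using LIMSEQ_Suc[OF lim] by (rule LIMSEQ_unique)
    qed
    show "0 \<le> L"
      using Y_inc by (auto simp: le_fun_def intro!: LIMSEQ_le_const[OF lim])
    show "L \<le> B" if "0 \<le> B" "F B \<le> B" for B
      using Y_le[OF that] by (auto simp: le_fun_def intro!: LIMSEQ_le_const2[OF lim])
    show "(\<lambda>k. (F ^^ k) 0 i j) \<longlonglongrightarrow> L i j" for i j
      using lim by (simp add: Y_def)
  qed
qed

text \<open>The phase can only move up (\<open>L1\<close>), then cross once at constant level (\<open>L0\<close>),
  then move down (\<open>Lm\<close>).\<close>
locale up_cross_down_qbd =
  fixes Lm L0 L1 :: "'s::finite rmat"
  assumes L1_Lm: "L1 \<otimes> Lm = 0" and L0_L0: "L0 \<otimes> L0 = 0" and L0_L1: "L0 \<otimes> L1 = 0"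
    and Lm_L0: "Lm \<otimes> L0 = 0" and Lm_L1: "Lm \<otimes> L1 = 0"
begin

definition path_mat :: "nat \<Rightarrow> nat \<Rightarrow> 's rmat" where
  "path_mat a b = mat_pow L1 a \<otimes> L0 \<otimes> mat_pow Lm b"

text \<open>After \<open>n\<close> steps at relative level \<open>m\<close>: either \<open>n\<close> up-steps, or \<open>a\<close> up-steps, the crossing
  and \<open>b\<close> down-steps with \<open>a + 1 + b = n\<close> and \<open>a - b = m\<close>.\<close>
definition taboo_mat :: "nat \<Rightarrow> nat \<Rightarrow> 's rmat" where
  "taboo_mat n m = (if m = n then mat_pow L1 n else 0)
     + (if m < n \<and> odd (n - m) then path_mat ((n + m - 1) div 2) ((n - m - 1) div 2) else 0)"

lemma path_mat_0: "path_mat n 0 = mat_pow L1 n \<otimes> L0"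
  by (simp add: path_mat_def)

lemma path_mat_mul_Lm: "path_mat a b \<otimes> Lm = path_mat a (Suc b)"
  by (simp add: path_mat_def mat_mul_assoc)

lemma path_mat_0_Suc_0: "path_mat 0 (Suc 0) = L0 \<otimes> Lm"
  by (simp add: path_mat_def)

lemma path_mat_Suc: "L1 \<otimes> path_mat a b \<otimes> Lm = path_mat (Suc a) (Suc b)"
  unfolding path_mat_def mat_pow_Suc_left[of L1 a] mat_pow.simps(2)[of Lm b]
  by (simp add: mat_mul_assoc)

lemma path_mat_mul_L0: "path_mat a b \<otimes> L0 = 0"
  and path_mat_mul_L1: "path_mat a b \<otimes> L1 = 0"
  by (cases b; simp add: path_mat_def mat_mul_assoc mat_pow_Suc_left L0_L0 L0_L1 Lm_L0 Lm_L1)+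

lemma taboo_mat_mul_Lm:
  "taboo_mat n (Suc m) \<otimes> Lm
     = (if Suc m < n \<and> odd (n - Suc m) then path_mat ((n + m) div 2) ((n - m) div 2) else 0)"
proof -
  have "mat_pow L1 (Suc m) \<otimes> Lm = 0"
    by (simp add: mat_mul_assoc L1_Lm)
  moreover have "Suc ((n - Suc m - 1) div 2) = (n - m) div 2" if "odd (n - Suc m)"
  proof -
    from that obtain d where "n - Suc m = 2 * d + 1"
      by (rule oddE)
    then have "n - Suc m - 1 = 2 * d" "n - m = 2 * d + 2"
      by arith+
    then show ?thesis
      by simp
  qed
  ultimately show ?thesis
    by (auto simp: taboo_mat_def mat_mul_add_left path_mat_mul_Lm)
qed

lemma taboo_mat_mul_L0: "taboo_mat n m \<otimes> L0 = (if m = n then path_mat n 0 else 0)"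
  by (simp add: taboo_mat_def mat_mul_add_left path_mat_mul_L0 path_mat_0)

lemma taboo_mat_mul_L1: "taboo_mat n m \<otimes> L1 = (if m = n then mat_pow L1 (Suc n) else 0)"
  by (simp add: taboo_mat_def mat_mul_add_left path_mat_mul_L1)

lemma taboo_mat_Suc:
  "taboo_mat (Suc n) m = taboo_mat n (Suc m) \<otimes> Lm + taboo_mat n m \<otimes> L0
     + (if 0 < m then taboo_mat n (m - 1) \<otimes> L1 else 0)"
proof -
  note mul = taboo_mat_mul_Lm taboo_mat_mul_L0 taboo_mat_mul_L1
  consider "m = Suc n" | "m = n" | "m < n" "even (n - m)" | "m < n" "odd (n - m)" | "Suc n < m"
    by linarith
  then show ?thesis
  proof cases
    case 1
    then show ?thesis by (simp add: mul) (simp add: taboo_mat_def)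
  next
    case 2
    then show ?thesis by (simp add: mul) (auto simp: taboo_mat_def path_mat_0)
  next
    case 3
    then have "Suc m < n" "odd (n - Suc m)"
      by presburger+
    with 3 show ?thesis
      by (simp add: mul) (simp add: taboo_mat_def)
  next
    case 4
    then have "\<not> odd (n - Suc m)" "\<not> odd (Suc n - m)"
      by presburger+
    with 4 show ?thesis
      by (simp add: mul) (simp add: taboo_mat_def)
  next
    case 5
    then show ?thesis by (simp add: mul) (simp add: taboo_mat_def)
  qed
qed

lemma taboo_dist_eq_taboo_mat: "taboo_dist Lm L0 L1 i n m s = taboo_mat n m i s"
proof (induction n arbitrary: m s)
  case 0
  then show ?case by (simp add: taboo_mat_def mat_one_def)
next
  case (Suc n)
  then show ?case
    by (cases "0 < m") (simp_all add: taboo_mat_Suc mat_mul_def sum.distrib)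
qed

lemma first_passage_eq:
  "first_passage Lm L0 L1 n i j
     = (if n = 0 then Lm i j else 0) + (if odd n then path_mat (n div 2) (Suc (n div 2)) i j else 0)"
proof -
  have "first_passage Lm L0 L1 n i j = (taboo_mat n 0 \<otimes> Lm) i j"
    by (simp add: first_passage_def taboo_dist_eq_taboo_mat mat_mul_def)
  moreover have "(n - 1) div 2 = n div 2" if "odd n"
    using that by (auto elim!: oddE)
  ultimately show ?thesis
    by (auto simp: taboo_mat_def mat_mul_add_left path_mat_mul_Lm)
qed

lemma qbd_G_eq:
  assumes "(\<lambda>a. path_mat a (Suc a) i j) sums g"
  shows "qbd_G Lm L0 L1 i j = Lm i j + g"
proof -
  define f where "f n = (if odd n then path_mat (n div 2) (Suc (n div 2)) i j else 0)" for n
  have "(\<lambda>a. f (2 * a + 1)) sums g"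
    using assms by (simp add: f_def)
  moreover have "strict_mono (\<lambda>a::nat. 2 * a + 1)"
    by (rule strict_monoI) simp
  moreover have "f n = 0" if "n \<notin> range (\<lambda>a. 2 * a + 1)" for n
    using that by (auto simp: f_def elim!: oddE)
  ultimately have "f sums g"
    using sums_mono_reindex by blast
  moreover have "(\<lambda>n. if n = 0 then Lm i j else 0) sums Lm i j"
    using sums_single[of 0 "\<lambda>_. Lm i j"] by simp
  ultimately have "(\<lambda>n. (if n = 0 then Lm i j else 0) + f n) sums (Lm i j + g)"
    by (intro sums_add)
  then have "(\<lambda>n. first_passage Lm L0 L1 n i j) sums (Lm i j + g)"
    by (simp add: first_passage_eq f_def)
  then show ?thesis
    unfolding qbd_G_def by (rule sums_unique[symmetric])
qed

end

locale fluid_qbd =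
  fixes T Psi X :: "'s::finite rmat" and Sp :: "'s set" and lam :: real
  assumes generator: "is_generator T"
    and Psi_minimal: "min_nonneg_riccati_sol T Sp Psi"
    and lam_pos: "lam > 0" and lam_ge_diag: "\<forall>i. lam \<ge> \<bar>T i i\<bar>"
    and X_left_inverse: "\<forall>i\<in>-Sp. \<forall>j\<in>-Sp.
           (\<Sum>k\<in>-Sp. X i k * ((if k = j then 1 else 0) - Umat T Sp Psi k j / lam))
             = (if i = j then 1 else 0)"
    and X_right_inverse: "\<forall>i\<in>-Sp. \<forall>j\<in>-Sp.
           (\<Sum>k\<in>-Sp. ((if i = k then 1 else 0) - Umat T Sp Psi i k / lam) * X k j)
             = (if i = j then 1 else 0)"
begin

abbreviation P :: "'s rmat" where
  "P \<equiv> Plam lam T"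

lemma T_offdiag_nonneg: "i \<noteq> j \<Longrightarrow> 0 \<le> T i j"
  using generator by (simp add: is_generator_def)

lemma T_eq: "T i j = lam * (P i j - mat_one i j)"
  using lam_pos by (simp add: Plam_def mat_one_def)

lemma P_nonneg: "0 \<le> P i j"
proof (cases "i = j")
  case True
  have "- lam \<le> T i i"
    using lam_ge_diag by (metis abs_le_iff minus_le_iff)
  then have "- 1 \<le> T i i / lam"
    using lam_pos by (simp add: le_divide_eq)
  then show ?thesis
    using True by (simp add: Plam_def)
next
  case False
  then show ?thesis
    using T_offdiag_nonneg lam_pos by (simp add: Plam_def)
qed

lemma P_row_sum: "(\<Sum>j\<in>UNIV. P i j) = 1"
  using generator by (simp add: Plam_def is_generator_def sum.distrib flip: sum_divide_distrib)

definition pm_block :: "'s rmat \<Rightarrow> 's rmat" where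
  "pm_block Y = (\<lambda>i j. if i \<in> Sp \<and> j \<in> -Sp then Y i j else 0)"

lemma pm_block_idem [simp]: "pm_block (pm_block Y) = pm_block Y"
  by (simp add: pm_block_def fun_eq_iff)

text \<open>The left-hand side of the Riccati equation, with the right factor of the quadratic term
  decoupled: the QBD's \<open>\<G>\<close>-matrix will solve the equation linearised at \<open>Z = \<Psi>\<close>.\<close>
definition riccati_res :: "'s rmat \<Rightarrow> 's rmat \<Rightarrow> 's rmat" where
  "riccati_res Y Z i j = T i j + (\<Sum>k\<in>-Sp. Y i k * T k j) + (\<Sum>k\<in>Sp. T i k * Y k j)
     + (\<Sum>k\<in>-Sp. \<Sum>l\<in>Sp. Y i k * T k l * Z l j)"

lemma riccati_res_pm_block:
  assumes "i \<in> Sp" "j \<in> -Sp"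
  shows "riccati_res (pm_block Y) Z i j = riccati_res Y Z i j"
    and "riccati_res Y (pm_block Z) i j = riccati_res Y Z i j"
  using assms by (auto simp: riccati_res_def pm_block_def intro!: sum.cong)

lemma riccati_res_mono_right:
  assumes "0 \<le> Y" "\<And>l. l \<in> Sp \<Longrightarrow> Z l j \<le> Z' l j"
  shows "riccati_res Y Z i j \<le> riccati_res Y Z' i j"
proof -
  have "Y i k * T k l * Z l j \<le> Y i k * T k l * Z' l j" if "k \<in> -Sp" "l \<in> Sp" for k l
    using that assms T_offdiag_nonneg[of k l]
    by (intro mult_left_mono mult_nonneg_nonneg) (auto simp: le_fun_def)
  then have "(\<Sum>k\<in>-Sp. \<Sum>l\<in>Sp. Y i k * T k l * Z l j) \<le> (\<Sum>k\<in>-Sp. \<Sum>l\<in>Sp. Y i k * T k l * Z' l j)"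
    by (intro sum_mono) auto
  then show ?thesis
    unfolding riccati_res_def by simp
qed

text \<open>Since \<open>T = \<lambda> (P - I)\<close>, a Riccati solution is a fixed point of this map with
  nonnegative coefficients (see \<open>riccati_map_expand\<close>).\<close>
definition riccati_map :: "'s rmat \<Rightarrow> 's rmat \<Rightarrow> 's rmat" where
  "riccati_map Y Z = pm_block (\<lambda>i j. Y i j + riccati_res Y Z i j / (2 * lam))"

lemma riccati_map_expand:
  assumes i: "i \<in> Sp" and j: "j \<in> -Sp"
  shows "riccati_map Y Z i j = (P i j + (\<Sum>k\<in>-Sp. Y i k * P k j) + (\<Sum>k\<in>Sp. P i k * Y k j)
      + (\<Sum>k\<in>-Sp. \<Sum>l\<in>Sp. Y i k * P k l * Z l j)) / 2"
proof -
  have "i \<noteq> j"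
    using i j by auto
  then have e1: "T i j = lam * P i j"
    by (simp add: T_eq mat_one_def)
  have e2: "(\<Sum>k\<in>-Sp. Y i k * T k j) = lam * (\<Sum>k\<in>-Sp. Y i k * P k j) - lam * Y i j"
  proof -
    have "(\<Sum>k\<in>-Sp. Y i k * T k j)
        = (\<Sum>k\<in>-Sp. lam * (Y i k * P k j) - (if k = j then lam * Y i k else 0))"
      by (intro sum.cong) (auto simp: T_eq mat_one_def algebra_simps)
    then show ?thesis
      using j by (simp add: sum_subtractf sum_distrib_left)
  qed
  have e3: "(\<Sum>k\<in>Sp. T i k * Y k j) = lam * (\<Sum>k\<in>Sp. P i k * Y k j) - lam * Y i j"
  proof -
    have "(\<Sum>k\<in>Sp. T i k * Y k j)
        = (\<Sum>k\<in>Sp. lam * (P i k * Y k j) - (if i = k then lam * Y k j else 0))"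
      by (intro sum.cong) (auto simp: T_eq mat_one_def algebra_simps)
    then show ?thesis
      using i by (simp add: sum_subtractf sum_distrib_left)
  qed
  have e4: "(\<Sum>k\<in>-Sp. \<Sum>l\<in>Sp. Y i k * T k l * Z l j)
      = lam * (\<Sum>k\<in>-Sp. \<Sum>l\<in>Sp. Y i k * P k l * Z l j)"
    by (auto simp: sum_distrib_left T_eq mat_one_def intro!: sum.cong)
  have "riccati_res Y Z i j = lam * ((P i j + (\<Sum>k\<in>-Sp. Y i k * P k j) + (\<Sum>k\<in>Sp. P i k * Y k j)
      + (\<Sum>k\<in>-Sp. \<Sum>l\<in>Sp. Y i k * P k l * Z l j)) - 2 * Y i j)"
    unfolding riccati_res_def e1 e2 e3 e4 by (simp add: algebra_simps)
  then show ?thesis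
    using i j lam_pos by (simp add: riccati_map_def pm_block_def field_simps)
qed

lemma riccati_map_apply:
  "riccati_map Y Z i j = (if i \<in> Sp \<and> j \<in> -Sp then Y i j + riccati_res Y Z i j / (2 * lam) else 0)"
  unfolding riccati_map_def pm_block_def by (rule refl)

lemma riccati_map_pm_block: "pm_block (riccati_map Y Z) = riccati_map Y Z"
  unfolding riccati_map_def by (rule pm_block_idem)

lemma riccati_map_of_pm_block: "riccati_map (pm_block Y) (pm_block Z) = riccati_map Y Z"
proof (intro ext)
  fix i j
  show "riccati_map (pm_block Y) (pm_block Z) i j = riccati_map Y Z i j"
  proof (cases "i \<in> Sp \<and> j \<in> -Sp")
    case True
    then show ?thesis
      by (simp add: riccati_map_apply riccati_res_pm_block) (simp add: pm_block_def)
  qed (auto simp: riccati_map_apply)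
qed

lemma riccati_sol_iff_fixpoint: "riccati_sol T Sp Y \<longleftrightarrow> riccati_map Y Y = pm_block Y"
proof -
  have "riccati_map Y Y = pm_block Y
      \<longleftrightarrow> (\<forall>i\<in>Sp. \<forall>j\<in>-Sp. riccati_res Y Y i j / (2 * lam) = 0)"
    by (auto simp: riccati_map_def pm_block_def fun_eq_iff)
  then show ?thesis
    using lam_pos by (simp add: riccati_sol_def riccati_res_def)
qed

lemma riccati_map_mono:
  assumes "0 \<le> Y" "Y \<le> Y'" "0 \<le> Z" "Z \<le> Z'"
  shows "riccati_map Y Z \<le> riccati_map Y' Z'"
proof (intro le_funI)
  fix i j
  have Y: "0 \<le> Y i j" "Y i j \<le> Y' i j" and Z: "0 \<le> Z i j" "Z i j \<le> Z' i j" for i j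
    using assms by (auto simp: le_fun_def)
  show "riccati_map Y Z i j \<le> riccati_map Y' Z' i j"
  proof (cases "i \<in> Sp \<and> j \<in> -Sp")
    case True
    have Y': "0 \<le> Y' i j" for i j
      using Y order_trans by blast
    have "Y i k * P k l \<le> Y' i k * P k l" for k l
      using Y P_nonneg by (intro mult_right_mono)
    then have "Y i k * P k l * Z l j \<le> Y' i k * P k l * Z' l j" for k l
      using Y Y' Z P_nonneg by (intro mult_mono) simp_all
    then show ?thesis
      using True Y P_nonneg
      by (simp add: riccati_map_expand sum_mono add_mono mult_right_mono mult_left_mono)
  qed (auto simp: riccati_map_def pm_block_def)
qed

lemma riccati_map_nonneg: "0 \<le> riccati_map 0 0"
proof (intro le_funI)
  fix i j
  show "0 i j \<le> riccati_map 0 0 i j"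
  proof (cases "i \<in> Sp \<and> j \<in> -Sp")
    case True
    then show ?thesis
      using P_nonneg by (simp add: riccati_map_expand)
  qed (auto simp: riccati_map_def pm_block_def)
qed

lemma riccati_map_row_sum:
  assumes nonneg: "0 \<le> Y" "0 \<le> Z"
    and rows: "\<And>i. i \<in> Sp \<Longrightarrow> (\<Sum>j\<in>-Sp. Y i j) \<le> 1" "\<And>i. i \<in> Sp \<Longrightarrow> (\<Sum>j\<in>-Sp. Z i j) \<le> 1"
    and i: "i \<in> Sp"
  shows "(\<Sum>j\<in>-Sp. riccati_map Y Z i j) \<le> 1"
proof -
  have Y: "0 \<le> Y i j" and Z: "0 \<le> Z i j" for i j
    using nonneg by (auto simp: le_fun_def)
  define a where "a = (\<Sum>j\<in>-Sp. P i j)"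
  define b where "b = (\<Sum>k\<in>-Sp. Y i k * (\<Sum>j\<in>-Sp. P k j))"
  define c where "c = (\<Sum>k\<in>Sp. P i k * (\<Sum>j\<in>-Sp. Y k j))"
  define d where "d = (\<Sum>k\<in>-Sp. Y i k * (\<Sum>l\<in>Sp. P k l * (\<Sum>j\<in>-Sp. Z l j)))"
  have "(\<Sum>j\<in>-Sp. \<Sum>k\<in>-Sp. Y i k * P k j) = b"
    unfolding b_def by (subst sum.swap) (simp add: sum_distrib_left)
  moreover have "(\<Sum>j\<in>-Sp. \<Sum>k\<in>Sp. P i k * Y k j) = c"
    unfolding c_def by (subst sum.swap) (simp add: sum_distrib_left)
  moreover have "(\<Sum>j\<in>-Sp. \<Sum>k\<in>-Sp. \<Sum>l\<in>Sp. Y i k * P k l * Z l j) = d"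
  proof -
    have "(\<Sum>j\<in>-Sp. \<Sum>k\<in>-Sp. \<Sum>l\<in>Sp. Y i k * P k l * Z l j)
        = (\<Sum>k\<in>-Sp. \<Sum>l\<in>Sp. \<Sum>j\<in>-Sp. Y i k * P k l * Z l j)"
      by (subst sum.swap) (subst sum.swap, rule refl)
    then show ?thesis
      unfolding d_def by (simp add: sum_distrib_left mult.assoc)
  qed
  moreover have "(\<Sum>j\<in>-Sp. riccati_map Y Z i j) = (\<Sum>j\<in>-Sp. (P i j + (\<Sum>k\<in>-Sp. Y i k * P k j)
      + (\<Sum>k\<in>Sp. P i k * Y k j) + (\<Sum>k\<in>-Sp. \<Sum>l\<in>Sp. Y i k * P k l * Z l j)) / 2)"
    using i by (intro sum.cong refl) (simp add: riccati_map_expand)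
  ultimately have "(\<Sum>j\<in>-Sp. riccati_map Y Z i j) = (a + b + c + d) / 2"
    unfolding a_def by (simp add: sum.distrib flip: sum_divide_distrib)
  moreover have "c \<le> (\<Sum>k\<in>Sp. P i k)"
    unfolding c_def using rows(1) P_nonneg by (intro sum_mono) (simp add: mult_left_le)
  moreover have "d \<le> (\<Sum>k\<in>-Sp. Y i k * (\<Sum>l\<in>Sp. P k l))"
    unfolding d_def using rows(2) P_nonneg Y
    by (intro sum_mono mult_left_mono) (auto intro!: sum_mono simp: mult_left_le)
  moreover have "a + (\<Sum>k\<in>Sp. P i k) = 1"
    unfolding a_def using sum_add_sum_Compl[of "P i" Sp] P_row_sum by simp
  moreover have "b + (\<Sum>k\<in>-Sp. Y i k * (\<Sum>l\<in>Sp. P k l)) = (\<Sum>k\<in>-Sp. Y i k)"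
    unfolding b_def sum.distrib[symmetric] distrib_left[symmetric]
    using sum_add_sum_Compl[of "P _" Sp] P_row_sum by (simp add: add.commute)
  moreover have "(\<Sum>k\<in>-Sp. Y i k) \<le> 1"
    using rows(1) i by simp
  ultimately show ?thesis
    by simp
qed

lemma tendsto_riccati_map:
  assumes "\<And>i j. (\<lambda>k. Y k i j) \<longlonglongrightarrow> L i j"
  shows "(\<lambda>k. riccati_map (Y k) (Y k) i j) \<longlonglongrightarrow> riccati_map L L i j"
proof (cases "i \<in> Sp \<and> j \<in> -Sp")
  case True
  then show ?thesis
    using lam_pos unfolding riccati_map_def pm_block_def riccati_res_def
    by (simp, intro tendsto_intros assms) simp
next
  case False
  then have "riccati_map M M i j = 0" for M
    by (auto simp: riccati_map_def pm_block_def)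
  then show ?thesis
    by simp
qed

lemma Psi_block_nonneg: "0 \<le> pm_block Psi"
  using Psi_minimal by (auto simp: min_nonneg_riccati_sol_def pm_block_def le_fun_def)

lemma riccati_res_Psi: "i \<in> Sp \<Longrightarrow> j \<in> -Sp \<Longrightarrow> riccati_res Psi Psi i j = 0"
  using Psi_minimal by (simp add: min_nonneg_riccati_sol_def riccati_sol_def riccati_res_def)

lemma riccati_map_Psi: "riccati_map (pm_block Psi) (pm_block Psi) = pm_block Psi"
  using Psi_minimal by (simp add: riccati_map_of_pm_block min_nonneg_riccati_sol_def
      flip: riccati_sol_iff_fixpoint)

definition riccati_iterate :: "nat \<Rightarrow> 's rmat" where
  "riccati_iterate k = ((\<lambda>Y. riccati_map Y Y) ^^ k) 0"

lemma riccati_iterate_substochastic: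
  "(\<forall>i j. 0 \<le> riccati_iterate k i j) \<and> (\<forall>i\<in>Sp. (\<Sum>j\<in>-Sp. riccati_iterate k i j) \<le> 1)"
proof (induction k)
  case 0
  show ?case by (simp add: riccati_iterate_def)
next
  case (Suc k)
  let ?Y = "riccati_iterate k"
  from Suc have Y: "0 \<le> ?Y" and rows: "\<And>i. i \<in> Sp \<Longrightarrow> (\<Sum>j\<in>-Sp. ?Y i j) \<le> 1"
    by (simp_all add: le_fun_def)
  have "riccati_iterate (Suc k) = riccati_map ?Y ?Y"
    by (simp add: riccati_iterate_def)
  moreover have "0 \<le> riccati_map ?Y ?Y"
    using riccati_map_nonneg riccati_map_mono[OF order.refl Y order.refl Y] by (rule order_trans)
  moreover have "\<forall>i\<in>Sp. (\<Sum>j\<in>-Sp. riccati_map ?Y ?Y i j) \<le> 1"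
    using riccati_map_row_sum[OF Y Y rows rows] by blast
  ultimately show ?case
    by (simp add: le_fun_def)
qed

lemma riccati_iteration_limit:
  obtains L where "pm_block Psi \<le> L" "\<And>B. 0 \<le> B \<Longrightarrow> riccati_map B B \<le> B \<Longrightarrow> L \<le> B"
    and "\<And>i. i \<in> Sp \<Longrightarrow> (\<Sum>j\<in>-Sp. L i j) \<le> 1"
proof -
  let ?F = "\<lambda>Y. riccati_map Y Y"
  have mono: "?F A \<le> ?F B" if "0 \<le> A" "A \<le> B" for A B
    by (rule riccati_map_mono[OF that that])
  obtain L where L_fix: "?F L = L" and L_nonneg: "0 \<le> L"
    and least: "\<And>B. 0 \<le> B \<Longrightarrow> ?F B \<le> B \<Longrightarrow> L \<le> B"
    and lim: "\<And>i j. (\<lambda>k. riccati_iterate k i j) \<longlonglongrightarrow> L i j"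
    unfolding riccati_iterate_def
    by (rule least_nonneg_fixpoint_by_iteration[of ?F, OF mono riccati_map_nonneg
          tendsto_riccati_map Psi_block_nonneg]) (simp_all add: riccati_map_Psi)
  have "riccati_sol T Sp L"
    using L_fix riccati_map_pm_block[of L L] by (simp add: riccati_sol_iff_fixpoint)
  moreover have "\<forall>i\<in>Sp. \<forall>j\<in>-Sp. 0 \<le> L i j"
    using L_nonneg by (simp add: le_fun_def)
  ultimately have "\<forall>i\<in>Sp. \<forall>j\<in>-Sp. Psi i j \<le> L i j"
    using Psi_minimal unfolding min_nonneg_riccati_sol_def by blast
  then have Psi_le: "pm_block Psi \<le> L"
    using L_nonneg by (simp add: pm_block_def le_fun_def)
  have rows: "(\<Sum>j\<in>-Sp. L i j) \<le> 1" if "i \<in> Sp" for i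
  proof (rule LIMSEQ_le_const2)
    show "(\<lambda>k. \<Sum>j\<in>-Sp. riccati_iterate k i j) \<longlonglongrightarrow> (\<Sum>j\<in>-Sp. L i j)"
      by (intro tendsto_sum lim)
    show "\<exists>N. \<forall>k\<ge>N. (\<Sum>j\<in>-Sp. riccati_iterate k i j) \<le> 1"
      using riccati_iterate_substochastic that by simp
  qed
  show thesis
    using Psi_le least rows by (rule that)
qed

lemma Psi_le_supersolution:
  assumes "0 \<le> B" "riccati_map B B \<le> B"
  shows "pm_block Psi \<le> B"
proof (rule riccati_iteration_limit)
  fix L assume "pm_block Psi \<le> L" "\<And>B. 0 \<le> B \<Longrightarrow> riccati_map B B \<le> B \<Longrightarrow> L \<le> B"
  then show ?thesis
    using assms by (blast intro: order.trans)
qed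

lemma Psi_nonneg: "i \<in> Sp \<Longrightarrow> j \<in> -Sp \<Longrightarrow> 0 \<le> Psi i j"
  using Psi_minimal by (simp add: min_nonneg_riccati_sol_def)

lemma Psi_row_sum:
  assumes i: "i \<in> Sp"
  shows "(\<Sum>j\<in>-Sp. Psi i j) \<le> 1"
proof (rule riccati_iteration_limit)
  fix L assume le: "pm_block Psi \<le> L" and rows: "\<And>i. i \<in> Sp \<Longrightarrow> (\<Sum>j\<in>-Sp. L i j) \<le> 1"
  have "Psi i j \<le> L i j" if "j \<in> -Sp" for j
    using le_funD[OF le_funD[OF le, of i], of j] i that by (simp add: pm_block_def)
  then have "(\<Sum>j\<in>-Sp. Psi i j) \<le> (\<Sum>j\<in>-Sp. L i j)"
    by (rule sum_mono)
  also have "\<dots> \<le> 1"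
    using rows i .
  finally show ?thesis .
qed

definition N :: "'s rmat" where
  "N i j = mat_one i j - Umat T Sp Psi i j / lam"

lemma X_mult_N: "i \<in> -Sp \<Longrightarrow> j \<in> -Sp \<Longrightarrow> (\<Sum>k\<in>-Sp. X i k * N k j) = mat_one i j"
  using X_left_inverse by (simp add: N_def mat_one_def)

lemma N_mult_X: "i \<in> -Sp \<Longrightarrow> j \<in> -Sp \<Longrightarrow> (\<Sum>k\<in>-Sp. N i k * X k j) = mat_one i j"
  using X_right_inverse by (simp add: N_def mat_one_def)

lemma N_offdiag_nonpos:
  assumes "i \<in> -Sp" "k \<in> -Sp" "i \<noteq> k"
  shows "N i k \<le> 0"
proof -
  have "0 \<le> T i l" if "l \<in> Sp" for l
    using assms that by (intro T_offdiag_nonneg) auto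
  then have "0 \<le> Umat T Sp Psi i k"
    unfolding Umat_def using assms T_offdiag_nonneg Psi_nonneg
    by (intro add_nonneg_nonneg sum_nonneg mult_nonneg_nonneg) auto
  then show ?thesis
    using assms lam_pos by (simp add: N_def mat_one_def)
qed

lemma N_row_sum:
  assumes i: "i \<in> -Sp"
  shows "(\<Sum>k\<in>-Sp. N i k) \<ge> 1"
proof -
  have "(\<Sum>k\<in>-Sp. Umat T Sp Psi i k) = (\<Sum>k\<in>-Sp. T i k) + (\<Sum>l\<in>Sp. T i l * (\<Sum>k\<in>-Sp. Psi l k))"
    unfolding Umat_def sum.distrib by (subst sum.swap) (simp add: sum_distrib_left)
  also have "\<dots> \<le> (\<Sum>k\<in>-Sp. T i k) + (\<Sum>l\<in>Sp. T i l)"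
  proof (intro add_left_mono sum_mono mult_left_le)
    show "(\<Sum>k\<in>-Sp. Psi l k) \<le> 1" "0 \<le> T i l" if "l \<in> Sp" for l
      using i that Psi_row_sum by (auto intro: T_offdiag_nonneg)
  qed
  also have "\<dots> = 0"
    using sum_add_sum_Compl[of "T i" Sp] generator by (simp add: is_generator_def add.commute)
  finally have "(\<Sum>k\<in>-Sp. Umat T Sp Psi i k) / lam \<le> 0"
    using lam_pos by (simp add: divide_nonpos_pos)
  moreover have "(\<Sum>k\<in>-Sp. mat_one i k) = 1"
    using i by (simp add: mat_one_def)
  ultimately show ?thesis
    by (simp add: N_def sum_subtractf flip: sum_divide_distrib)
qed

lemma X_nonneg: "i \<in> -Sp \<Longrightarrow> j \<in> -Sp \<Longrightarrow> 0 \<le> X i j"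
  by (rule right_inverse_nonneg[of "-Sp" N])
    (auto intro: N_offdiag_nonpos N_mult_X less_le_trans[OF zero_less_one N_row_sum])

definition Lm :: "'s rmat" where
  "Lm = (\<lambda>i j. if i \<in> -Sp \<and> j \<in> -Sp then X i j else 0)"

definition L0 :: "'s rmat" where
  "L0 = (\<lambda>i j. if i \<in> Sp \<and> j \<in> -Sp then P i j else 0)"

definition L1 :: "'s rmat" where
  "L1 = (\<lambda>i j. if i \<in> Sp \<and> j \<in> Sp then P i j else 0)"

lemma qbd_blocks_nonneg: "0 \<le> Lm" "0 \<le> L0" "0 \<le> L1"
  by (simp_all add: le_fun_def Lm_def L0_def L1_def X_nonneg P_nonneg)

sublocale qbd: up_cross_down_qbd Lm L0 L1
  by unfold_locales (auto simp: mat_mul_def Lm_def L0_def L1_def fun_eq_iff intro!: sum.neutral)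

lemma mat_mul_Lm: "(A \<otimes> Lm) i j = (if j \<in> -Sp then \<Sum>k\<in>-Sp. A i k * X k j else 0)"
proof -
  have "(A \<otimes> Lm) i j = (\<Sum>k\<in>Sp. A i k * Lm k j) + (\<Sum>k\<in>-Sp. A i k * Lm k j)"
    unfolding mat_mul_def by (rule sum_add_sum_Compl[of _ Sp, symmetric])
  moreover have "(\<Sum>k\<in>Sp. A i k * Lm k j) = 0"
    by (rule sum.neutral) (simp add: Lm_def)
  moreover have "(\<Sum>k\<in>-Sp. A i k * Lm k j) = (if j \<in> -Sp then \<Sum>k\<in>-Sp. A i k * X k j else 0)"
    by (cases "j \<in> -Sp") (auto simp: Lm_def intro!: sum.cong sum.neutral)
  ultimately show ?thesis
    by simp
qed

lemma L1_mat_mul: "(L1 \<otimes> A) i j = (if i \<in> Sp then \<Sum>l\<in>Sp. P i l * A l j else 0)"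
proof -
  have "(L1 \<otimes> A) i j = (\<Sum>l\<in>Sp. L1 i l * A l j) + (\<Sum>l\<in>-Sp. L1 i l * A l j)"
    unfolding mat_mul_def by (rule sum_add_sum_Compl[of _ Sp, symmetric])
  moreover have "(\<Sum>l\<in>-Sp. L1 i l * A l j) = 0"
    by (rule sum.neutral) (simp add: L1_def)
  moreover have "(\<Sum>l\<in>Sp. L1 i l * A l j) = (if i \<in> Sp then \<Sum>l\<in>Sp. P i l * A l j else 0)"
    by (cases "i \<in> Sp") (auto simp: L1_def intro!: sum.cong sum.neutral)
  ultimately show ?thesis
    by simp
qed

text \<open>The right-hand side of the first-passage equation \<open>G = A\<^sub>0 A\<^sub>-\<^sub>1 + A\<^sub>1 G A\<^sub>-\<^sub>1\<close>
  satisfied by the \<open>S\<^sub>+ \<times> S\<^sub>-\<close> block of the \<open>\<G>\<close>-matrix.\<close>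
definition qbd_step :: "'s rmat \<Rightarrow> 's rmat" where
  "qbd_step Y = L0 \<otimes> Lm + L1 \<otimes> Y \<otimes> Lm"

lemma qbd_step_apply:
  "qbd_step Y i j = (if i \<in> Sp \<and> j \<in> -Sp
     then \<Sum>k\<in>-Sp. (P i k + (\<Sum>l\<in>Sp. P i l * Y l k)) * X k j else 0)"
proof -
  have "qbd_step Y = (L0 + L1 \<otimes> Y) \<otimes> Lm"
    by (simp add: qbd_step_def mat_mul_add_left)
  moreover have "(L0 + L1 \<otimes> Y) i k = (if i \<in> Sp then P i k + (\<Sum>l\<in>Sp. P i l * Y l k) else 0)"
    if "k \<in> -Sp" for k
    using that by (simp add: L0_def L1_mat_mul)
  ultimately show ?thesis
    by (auto simp: mat_mul_Lm intro!: sum.cong)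
qed

lemma pm_block_qbd_step: "pm_block (qbd_step Y) = qbd_step Y"
  by (auto simp: pm_block_def qbd_step_apply fun_eq_iff)

lemma qbd_step_mono: "0 \<le> A \<Longrightarrow> A \<le> B \<Longrightarrow> qbd_step A \<le> qbd_step B"
  unfolding qbd_step_def using qbd_blocks_nonneg
  by (intro add_left_mono mat_mul_mono mat_mul_nonneg order.refl)

lemma qbd_step_zero_nonneg: "0 \<le> qbd_step 0"
  using qbd_blocks_nonneg by (simp add: qbd_step_def mat_mul_nonneg)

lemma tendsto_qbd_step:
  assumes "\<And>i j. (\<lambda>k. Y k i j) \<longlonglongrightarrow> L i j"
  shows "(\<lambda>k. qbd_step (Y k) i j) \<longlonglongrightarrow> qbd_step L i j"
  unfolding qbd_step_def plus_fun_apply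
  by (intro tendsto_add tendsto_const tendsto_mat_mul assms)

lemma qbd_step_residual:
  assumes i: "i \<in> Sp" and j: "j \<in> -Sp"
  shows "(\<Sum>k\<in>-Sp. Y i k * N k j) - (P i j + (\<Sum>l\<in>Sp. P i l * Y l j))
    = - riccati_res Y Psi i j / lam"
proof -
  have "(\<Sum>k\<in>-Sp. Y i k * N k j) = (\<Sum>k\<in>-Sp. (if k = j then Y i k else 0)
      - (Y i k * T k j + (\<Sum>l\<in>Sp. Y i k * T k l * Psi l j)) / lam)"
    by (intro sum.cong) (auto simp: N_def Umat_def mat_one_def sum_distrib_left field_simps)
  also have "\<dots> = Y i j - ((\<Sum>k\<in>-Sp. Y i k * T k j) + (\<Sum>k\<in>-Sp. \<Sum>l\<in>Sp. Y i k * T k l * Psi l j)) / lam"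
    using j by (simp add: sum_subtractf sum.distrib flip: sum_divide_distrib)
  finally have NY: "(\<Sum>k\<in>-Sp. Y i k * N k j) = \<dots>" .
  have "(\<Sum>l\<in>Sp. P i l * Y l j) = (\<Sum>l\<in>Sp. (if l = i then Y l j else 0) + T i l * Y l j / lam)"
    by (intro sum.cong) (auto simp: Plam_def algebra_simps)
  also have "\<dots> = Y i j + (\<Sum>l\<in>Sp. T i l * Y l j) / lam"
    using i by (simp add: sum.distrib flip: sum_divide_distrib)
  finally have PY: "(\<Sum>l\<in>Sp. P i l * Y l j) = \<dots>" .
  have "P i j = T i j / lam"
    using i j by (auto simp: Plam_def)
  with NY PY show ?thesis
    by (simp add: riccati_res_def diff_divide_distrib add_divide_distrib)
qed

lemma qbd_step_fixpoint_iff: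
  "qbd_step Y = pm_block Y \<longleftrightarrow> (\<forall>i\<in>Sp. \<forall>j\<in>-Sp. riccati_res Y Psi i j = 0)"
proof -
  define W where "W i k = P i k + (\<Sum>l\<in>Sp. P i l * Y l k)" for i k
  have "qbd_step Y = pm_block Y \<longleftrightarrow> (\<forall>i\<in>Sp. \<forall>j\<in>-Sp. Y i j = (\<Sum>k\<in>-Sp. W i k * X k j))"
    by (auto simp: fun_eq_iff qbd_step_apply pm_block_def W_def)
  also have "\<dots> \<longleftrightarrow> (\<forall>i\<in>Sp. \<forall>j\<in>-Sp. (\<Sum>k\<in>-Sp. Y i k * N k j) = W i j)"
    using row_mult_inverse_iff[of "-Sp" X N "Y _" "W _", OF X_mult_N N_mult_X] by blast
  also have "\<dots> \<longleftrightarrow> (\<forall>i\<in>Sp. \<forall>j\<in>-Sp. riccati_res Y Psi i j = 0)"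
  proof -
    have "(\<Sum>k\<in>-Sp. Y i k * N k j) = W i j \<longleftrightarrow> riccati_res Y Psi i j = 0"
      if "i \<in> Sp" "j \<in> -Sp" for i j
      using qbd_step_residual[OF that, of Y] lam_pos unfolding W_def
      by auto
    then show ?thesis
      by auto
  qed
  finally show ?thesis .
qed

lemma qbd_step_Psi: "qbd_step (pm_block Psi) = pm_block Psi"
  using qbd_step_fixpoint_iff[of "pm_block Psi"] by (simp add: riccati_res_pm_block riccati_res_Psi)

lemma qbd_step_iterate: "(qbd_step ^^ n) 0 = (\<Sum>a<n. qbd.path_mat a (Suc a))"
proof (induction n)
  case 0
  show ?case by simp
next
  case (Suc n)
  have "(qbd_step ^^ Suc n) 0 = L0 \<otimes> Lm + (\<Sum>a<n. L1 \<otimes> qbd.path_mat a (Suc a) \<otimes> Lm)"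
    by (simp add: Suc.IH qbd_step_def mat_mul_sum_left mat_mul_sum_right)
  also have "\<dots> = (\<Sum>a<Suc n. qbd.path_mat a (Suc a))"
    by (simp only: qbd.path_mat_Suc sum.lessThan_Suc_shift qbd.path_mat_0_Suc_0)
  finally show ?case .
qed

text \<open>Replacing \<open>\<Psi>\<close> by the smaller \<open>L\<close> in the quadratic term can only decrease the
  Riccati residual.\<close>
lemma riccati_supersolution_of_qbd_fixpoint:
  assumes L_nonneg: "0 \<le> L" and L_le: "L \<le> pm_block Psi" and L_fix: "qbd_step L = L"
  shows "riccati_map L L \<le> L"
proof (intro le_funI)
  fix i j
  show "riccati_map L L i j \<le> L i j"
  proof (cases "i \<in> Sp \<and> j \<in> -Sp")
    case True
    have "qbd_step L = pm_block L"
      using L_fix pm_block_qbd_step by metis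
    then have "riccati_res L Psi i j = 0"
      using True by (simp add: qbd_step_fixpoint_iff)
    moreover have "L l j \<le> Psi l j" if "l \<in> Sp" for l
      using le_funD[OF le_funD[OF L_le, of l], of j] that True by (simp add: pm_block_def)
    then have "riccati_res L L i j \<le> riccati_res L Psi i j"
      by (rule riccati_res_mono_right[OF L_nonneg])
    ultimately show ?thesis
      using True lam_pos by (simp add: riccati_map_apply divide_nonpos_pos)
  next
    case False
    then show ?thesis
      using L_nonneg by (auto simp: riccati_map_apply le_fun_def)
  qed
qed

lemma passage_sums_Psi: "(\<lambda>a. qbd.path_mat a (Suc a) i j) sums pm_block Psi i j"
proof -
  obtain L where L_fix: "qbd_step L = L" and L_nonneg: "0 \<le> L"
    and least: "\<And>B. 0 \<le> B \<Longrightarrow> qbd_step B \<le> B \<Longrightarrow> L \<le> B"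
    and lim: "\<And>i j. (\<lambda>k. (qbd_step ^^ k) 0 i j) \<longlonglongrightarrow> L i j"
    by (rule least_nonneg_fixpoint_by_iteration[of qbd_step, OF qbd_step_mono qbd_step_zero_nonneg
          tendsto_qbd_step Psi_block_nonneg]) (simp_all add: qbd_step_Psi)
  have L_le: "L \<le> pm_block Psi"
    using least[OF Psi_block_nonneg] by (simp add: qbd_step_Psi)
  then have "pm_block Psi \<le> L"
    using riccati_supersolution_of_qbd_fixpoint[OF L_nonneg _ L_fix]
    by (intro Psi_le_supersolution[OF L_nonneg])
  with L_le have "L = pm_block Psi"
    by (rule order.antisym)
  then show ?thesis
    using lim[of i j] by (simp add: sums_def qbd_step_iterate sum_apply)
qed

lemma qbd_G_matrix:
  "qbd_G Lm L0 L1 = (\<lambda>i j. if i \<in> Sp \<and> j \<in> -Sp then Psi i j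
                            else if i \<in> -Sp \<and> j \<in> -Sp then X i j else 0)"
proof (intro ext)
  fix i j
  have "qbd_G Lm L0 L1 i j = Lm i j + pm_block Psi i j"
    by (rule qbd.qbd_G_eq[OF passage_sums_Psi])
  then show "qbd_G Lm L0 L1 i j = (if i \<in> Sp \<and> j \<in> -Sp then Psi i j
                            else if i \<in> -Sp \<and> j \<in> -Sp then X i j else 0)"
    by (auto simp: Lm_def pm_block_def)
qed

end

theorem lemma1:
  fixes T Psi X :: "'s::finite \<Rightarrow> 's \<Rightarrow> real" and Sp :: "'s set" and lam :: real
  assumes "is_generator T"
    and "Sp \<noteq> {}" and "- Sp \<noteq> {}"
    and "min_nonneg_riccati_sol T Sp Psi"
    and "lam > 0" and "\<forall>i. lam \<ge> \<bar>T i i\<bar>"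
    and "\<forall>i\<in>-Sp. \<forall>j\<in>-Sp.
           (\<Sum>k\<in>-Sp. X i k * ((if k = j then 1 else 0) - Umat T Sp Psi k j / lam))
             = (if i = j then 1 else 0)"
    and "\<forall>i\<in>-Sp. \<forall>j\<in>-Sp.
           (\<Sum>k\<in>-Sp. ((if i = k then 1 else 0) - Umat T Sp Psi i k / lam) * X k j)
             = (if i = j then 1 else 0)"
  shows "qbd_G
           (\<lambda>i j. if i \<in> -Sp \<and> j \<in> -Sp then X i j else 0)
           (\<lambda>i j. if i \<in> Sp \<and> j \<in> -Sp then Plam lam T i j else 0)
           (\<lambda>i j. if i \<in> Sp \<and> j \<in> Sp then Plam lam T i j else 0)
         = (\<lambda>i j. if i \<in> Sp \<and> j \<in> -Sp then Psi i j
                  else if i \<in> -Sp \<and> j \<in> -Sp then X i j else 0)"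
proof -
  interpret fluid_qbd T Psi X Sp lam
    using assms by unfold_locales auto
  show ?thesis
    using qbd_G_matrix by (simp add: Lm_def L0_def L1_def)
qed

end
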